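(* Let $N,K,d,T$ be positive integers, $W>0$ and $L_0>0$. For each round $t\in[T]$ and item $i\in[N]$ let $\mathbf{x}_{ti}\in\mathbb{R}^d$ be a feature vector with $\|\mathbf{x}_{ti}\|_2\le 1$, and let $\boldsymbol\vartheta^\star=(\boldsymbol\psi^\star,\boldsymbol\phi^\star)\in\mathbb{R}^{2d}$ satisfy $\|\boldsymbol\vartheta^\star\|_2\le W$ and $\langle\boldsymbol\phi^\star,\mathbf{x}_{ti}\rangle\ge L_0$ for all $t\in[T]$, $i\in[N]$. For each $t$ let $(S_t^\star,\mathbf{p}_t^\star)\in\operatorname{argmax}_{S\in\mathcal{S}_K,\ \mathbf{p}\in\mathbb{R}_+^N} R_t(S,\mathbf{p})$. Then for all $t\in[T]$ and all $i\in S_t^\star$, $$0\le p^\star_{ti}\le P:=\frac{3+W+\log K}{L_0}.$$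
   Context: $\mathcal{S}_K=\{S\subseteq[N]:|S|\le K\}$. For a price $p$, the attraction of item $i$ at round $t$ is $v_{ti}(p)=\exp(\langle\boldsymbol\psi^\star,\mathbf{x}_{ti}\rangle-\langle\boldsymbol\phi^\star,\mathbf{x}_{ti}\rangle p)$, and the expected revenue of offering assortment $S$ at price vector $\mathbf{p}\in\mathbb{R}_+^N$ is the multinomial-logit revenue $R_t(S,\mathbf{p})=\dfrac{\sum_{i\in S}p_i v_{ti}(p_i)}{1+\sum_{j\in S}v_{tj}(p_j)}$. *)

theory Defs
  imports "HOL-Analysis.Analysis"
begin

definition attraction :: "'d::euclidean_space \<Rightarrow> 'd \<Rightarrow> 'd \<Rightarrow> real \<Rightarrow> real" where
  "attraction psi phi xv p = exp (psi \<bullet> xv - (phi \<bullet> xv) * p)"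

definition revenue :: "(nat \<Rightarrow> nat \<Rightarrow> 'd::euclidean_space) \<Rightarrow> 'd \<Rightarrow> 'd \<Rightarrow> nat
    \<Rightarrow> nat set \<Rightarrow> (nat \<Rightarrow> real) \<Rightarrow> real" where
  "revenue x psi phi t S p =
     (\<Sum>i\<in>S. p i * attraction psi phi (x t i) (p i)) /
     (1 + (\<Sum>j\<in>S. attraction psi phi (x t j) (p j)))"

definition assortments :: "nat \<Rightarrow> nat \<Rightarrow> nat set set" where
  "assortments N K = {S. S \<subseteq> {1..N} \<and> card S \<le> K}"

text \<open>Price vectors in R_+^N (values outside [N] are irrelevant and unconstrained).\<close>
definition price_vectors :: "nat \<Rightarrow> (nat \<Rightarrow> real) set" where
  "price_vectors N = {p. \<forall>i\<in>{1..N}. 0 \<le> p i}"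

end

theory Submission
  imports Defs
begin

text \<open>Write R for the optimal revenue and v_j(q) = exp(a_j - b_j q) with a_j = psi x_j, b_j = phi x_j.
  Clearing the denominator gives R = (\<Sum>j. (p_j - R) v_j(p_j)), and moving a single price from
  p_i to q raises the revenue as soon as it raises the markup term (q - R) v_i(q). That term is
  uniquely maximised at q = R + 1/b_i with value exp(a_i - 1 - b_i R) / b_i, so at an optimum
  p_i = R + 1/b_i \<le> R + 1/L0. Bounding every markup term by its maximum gives
  L0 R \<le> K exp(W - 1 - L0 R), which forces L0 R \<le> 2 + W + log K.\<close>

lemma mult_exp_neg_le: "(u::real) * exp (- u) \<le> exp (-1)"
proof -
  have "u \<le> exp (u - 1)" using exp_ge_add_one_self[of "u - 1"] by simp
  hence "u * exp (-u) \<le> exp (u - 1) * exp (-u)" by (simp add: mult_right_mono)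
  also have "\<dots> = exp (-1)" by (simp add: exp_add[symmetric])
  finally show ?thesis .
qed

lemma mult_exp_neg_less: "(u::real) \<noteq> 1 \<Longrightarrow> u * exp (- u) < exp (-1)"
proof -
  assume "u \<noteq> 1"
  hence "u < exp (u - 1)" using exp_minus_greater[of "1 - u"] by simp
  hence "u * exp (-u) < exp (u - 1) * exp (-u)" by (simp add: mult_strict_right_mono)
  also have "\<dots> = exp (-1)" by (simp add: exp_add[symmetric])
  finally show ?thesis .
qed

lemma markup_exp_eq:
  fixes a b q r :: real
  assumes "0 < b"
  shows "(q - r) * exp (a - b * q) = exp (a - b * r) / b * (b * (q - r) * exp (- (b * (q - r))))"
proof -
  have "exp (a - b * q) = exp (a - b * r) * exp (- (b * (q - r)))"
    by (simp add: exp_add[symmetric] algebra_simps)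
  then show ?thesis using assms by (simp add: field_simps)
qed

lemma markup_exp_le:
  fixes a b q r :: real
  assumes "0 < b"
  shows "(q - r) * exp (a - b * q) \<le> exp (a - 1 - b * r) / b"
proof -
  have "(q - r) * exp (a - b * q) \<le> exp (a - b * r) / b * exp (-1)"
    unfolding markup_exp_eq[OF assms] using assms mult_exp_neg_le by (intro mult_left_mono) auto
  also have "\<dots> = exp (a - 1 - b * r) / b" by (simp add: exp_add[symmetric])
  finally show ?thesis .
qed

lemma markup_exp_less:
  fixes a b q r :: real
  assumes "0 < b" and "q \<noteq> r + 1 / b"
  shows "(q - r) * exp (a - b * q) < exp (a - 1 - b * r) / b"
proof -
  have "b * (q - r) \<noteq> 1" using assms by (auto simp: field_simps)
  then have "(q - r) * exp (a - b * q) < exp (a - b * r) / b * exp (-1)"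
    unfolding markup_exp_eq[OF assms(1)] using assms(1) mult_exp_neg_less
    by (intro mult_strict_left_mono) auto
  also have "\<dots> = exp (a - 1 - b * r) / b" by (simp add: exp_add[symmetric])
  finally show ?thesis .
qed

lemma markup_exp_at_max:
  fixes a b r :: real
  assumes "0 < b"
  shows "(r + 1 / b - r) * exp (a - b * (r + 1 / b)) = exp (a - 1 - b * r) / b"
  using assms by (simp add: algebra_simps)

lemma revenue_denominator_pos: "0 < 1 + (\<Sum>j\<in>S. attraction psi phi (x t j) (p j))"
  by (smt (verit) sum_nonneg exp_gt_zero attraction_def)

lemma revenue_nonneg:
  assumes "\<And>j. j \<in> S \<Longrightarrow> 0 \<le> p j"
  shows "0 \<le> revenue x psi phi t S p"
  unfolding revenue_def using assms revenue_denominator_pos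
  by (intro divide_nonneg_pos sum_nonneg) (auto simp: attraction_def)

lemma revenue_diff:
  "revenue x psi phi t S p - r =
     ((\<Sum>j\<in>S. (p j - r) * attraction psi phi (x t j) (p j)) - r) /
     (1 + (\<Sum>j\<in>S. attraction psi phi (x t j) (p j)))"
proof -
  define A where "A = (\<Sum>j\<in>S. p j * attraction psi phi (x t j) (p j))"
  define B where "B = (\<Sum>j\<in>S. attraction psi phi (x t j) (p j))"
  have "0 < 1 + B" unfolding B_def by (rule revenue_denominator_pos)
  then have "A / (1 + B) - r = (A - r * B - r) / (1 + B)"
    by (simp add: field_simps)
  then have "revenue x psi phi t S p - r = (A - r * B - r) / (1 + B)"
    by (simp add: revenue_def A_def B_def)
  also have "A - r * B = (\<Sum>j\<in>S. (p j - r) * attraction psi phi (x t j) (p j))"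
    by (simp add: A_def B_def left_diff_distrib sum_subtractf sum_distrib_left mult.assoc)
  finally show ?thesis by (simp add: B_def)
qed

lemma revenue_eq_markup_sum:
  "revenue x psi phi t S p =
     (\<Sum>j\<in>S. (p j - revenue x psi phi t S p) * attraction psi phi (x t j) (p j))"
  (is "?R = ?M")
proof -
  \<comment> \<open>?M contains ?R, so it is kept opaque lest simp rewrite ?R with itself forever.\<close>
  define M where "M = ?M"
  have "?R - ?R = (M - ?R) / (1 + (\<Sum>j\<in>S. attraction psi phi (x t j) (p j)))"
    unfolding M_def by (rule revenue_diff)
  then have "?R = M" using revenue_denominator_pos[of psi phi x t p S] by simp
  then show ?thesis by (simp only: M_def)
qed

lemma less_revenue_iff:
  "r < revenue x psi phi t S p \<longleftrightarrow> r < (\<Sum>j\<in>S. (p j - r) * attraction psi phi (x t j) (p j))"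
proof -
  have "r < revenue x psi phi t S p \<longleftrightarrow> 0 < revenue x psi phi t S p - r" by simp
  also have "\<dots> \<longleftrightarrow> 0 < (\<Sum>j\<in>S. (p j - r) * attraction psi phi (x t j) (p j)) - r"
    unfolding revenue_diff using revenue_denominator_pos[of psi phi x t p S]
    by (auto simp: zero_less_divide_iff)
  finally show ?thesis by simp
qed

lemma optimal_price_eq_markup:
  assumes "finite S" and "i \<in> S" and b: "0 < phi \<bullet> x t i"
    and R_nonneg: "0 \<le> revenue x psi phi t S p"
    and opt: "\<And>q. 0 \<le> q \<Longrightarrow> revenue x psi phi t S (p(i := q)) \<le> revenue x psi phi t S p"
  shows "p i = revenue x psi phi t S p + 1 / (phi \<bullet> x t i)"
proof (rule ccontr)
  define R where "R = revenue x psi phi t S p"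
  define q where "q = R + 1 / (phi \<bullet> x t i)"
  define m where "m p' j = (p' j - R) * attraction psi phi (x t j) (p' j)" for p' j
  assume "p i \<noteq> revenue x psi phi t S p + 1 / (phi \<bullet> x t i)"
  then have "m p i < exp (psi \<bullet> x t i - 1 - (phi \<bullet> x t i) * R) / (phi \<bullet> x t i)"
    unfolding m_def attraction_def R_def by (rule markup_exp_less[OF b])
  also have "\<dots> = m (p(i := q)) i"
    unfolding m_def attraction_def q_def by (simp only: fun_upd_same markup_exp_at_max[OF b])
  finally have "m p i < m (p(i := q)) i" .
  moreover have "sum (m p') S = m p' i + sum (m p) (S - {i})" if "p' \<in> {p, p(i := q)}" for p'
    using that sum.remove[OF assms(1,2), of "m p'"] by (auto simp: m_def intro: sum.cong)
  ultimately have "sum (m p) S < sum (m (p(i := q))) S" by auto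
  also have "sum (m p) S = R"
    unfolding m_def R_def by (rule revenue_eq_markup_sum[symmetric])
  finally have "R < revenue x psi phi t S (p(i := q))"
    unfolding less_revenue_iff m_def .
  moreover have "0 \<le> q" using R_nonneg b by (simp add: q_def R_def)
  ultimately show False using opt R_def by fastforce
qed

lemma revenue_le_card_mult_exp:
  fixes L0 W :: real
  assumes L0: "0 < L0"
    and b: "\<And>j. j \<in> S \<Longrightarrow> L0 \<le> phi \<bullet> x t j"
    and a: "\<And>j. j \<in> S \<Longrightarrow> psi \<bullet> x t j \<le> W"
    and p: "\<And>j. j \<in> S \<Longrightarrow> 0 \<le> p j"
  shows "L0 * revenue x psi phi t S p \<le> card S * exp (W - 1 - L0 * revenue x psi phi t S p)"
proof -
  define R where "R = revenue x psi phi t S p"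
  have R_nonneg: "0 \<le> R" unfolding R_def using p by (rule revenue_nonneg)
  have "R = (\<Sum>j\<in>S. (p j - R) * attraction psi phi (x t j) (p j))"
    unfolding R_def by (rule revenue_eq_markup_sum)
  also have "\<dots> \<le> (\<Sum>j\<in>S. exp (W - 1 - L0 * R) / L0)"
  proof (rule sum_mono)
    fix j assume j: "j \<in> S"
    have bj: "0 < phi \<bullet> x t j" using b[OF j] L0 by linarith
    have "(p j - R) * attraction psi phi (x t j) (p j)
        \<le> exp (psi \<bullet> x t j - 1 - (phi \<bullet> x t j) * R) / (phi \<bullet> x t j)"
      unfolding attraction_def by (rule markup_exp_le[OF bj])
    also have "\<dots> \<le> exp (W - 1 - L0 * R) / L0"
    proof (rule frac_le)
      have "L0 * R \<le> (phi \<bullet> x t j) * R" using b[OF j] R_nonneg by (rule mult_right_mono)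
      then show "exp (psi \<bullet> x t j - 1 - (phi \<bullet> x t j) * R) \<le> exp (W - 1 - L0 * R)"
        using a[OF j] by simp
    qed (use L0 b[OF j] in auto)
    finally show "(p j - R) * attraction psi phi (x t j) (p j) \<le> exp (W - 1 - L0 * R) / L0" .
  qed
  also have "\<dots> = card S * exp (W - 1 - L0 * R) / L0" by simp
  finally show ?thesis using L0 by (simp add: R_def field_simps)
qed

lemma le_add_ln_of_le_mult_exp:
  fixes y K W :: real
  assumes "1 \<le> K" and "0 \<le> W" and y: "y \<le> K * exp (W - 1 - y)"
  shows "y \<le> 2 + W + ln K"
proof (rule ccontr)
  assume "\<not> y \<le> 2 + W + ln K"
  then have "exp (W - 1 - y) < exp (-3 - ln K)" by simp
  also have "\<dots> = exp (-3) / K" using assms(1) by (simp add: exp_diff)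
  finally have "y < exp (-3)" using y assms(1) by (simp add: field_simps)
  also have "exp (-3::real) < 1" by simp
  finally show False using \<open>\<not> y \<le> 2 + W + ln K\<close> ln_ge_zero[OF assms(1)] assms(2) by linarith
qed

lemma inner_le_of_norm_pair_le:
  fixes u y :: "'a::real_inner" and v :: "'b::real_normed_vector"
  assumes "norm (u, v) \<le> W" and "norm y \<le> 1"
  shows "u \<bullet> y \<le> W"
proof -
  have "u \<bullet> y \<le> norm u * norm y" by (rule norm_cauchy_schwarz)
  also have "\<dots> \<le> norm u" using assms(2) by (simp add: mult_left_le)
  also have "\<dots> \<le> W" using norm_fst_le[of u v] assms(1) by simp
  finally show ?thesis .
qed

theorem lemma2p1:
  fixes N K T :: nat and W L0 :: real
    and x :: "nat \<Rightarrow> nat \<Rightarrow> real ^ 'd"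
    and psi phi :: "real ^ 'd"
    and Sst :: "nat \<Rightarrow> nat set" and pst :: "nat \<Rightarrow> nat \<Rightarrow> real"
  assumes "N > 0" and "K > 0" and "T > 0" and "W > 0" and "L0 > 0"
    and "\<And>t i. t \<in> {1..T} \<Longrightarrow> i \<in> {1..N} \<Longrightarrow> norm (x t i) \<le> 1"
    and "norm (psi, phi) \<le> W"
    and "\<And>t i. t \<in> {1..T} \<Longrightarrow> i \<in> {1..N} \<Longrightarrow> phi \<bullet> x t i \<ge> L0"
    and "\<And>t. t \<in> {1..T} \<Longrightarrow> Sst t \<in> assortments N K \<and> pst t \<in> price_vectors N \<and>
           (\<forall>S\<in>assortments N K. \<forall>p\<in>price_vectors N.
              revenue x psi phi t S p \<le> revenue x psi phi t (Sst t) (pst t))"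
  shows "\<forall>t\<in>{1..T}. \<forall>i\<in>Sst t. 0 \<le> pst t i \<and> pst t i \<le> (3 + W + ln (real K)) / L0"
proof (intro ballI)
  fix t i assume t: "t \<in> {1..T}" and i: "i \<in> Sst t"
  define R where "R = revenue x psi phi t (Sst t) (pst t)"
  have S: "Sst t \<subseteq> {1..N}" "card (Sst t) \<le> K" and p: "pst t \<in> price_vectors N"
    using assms(9)[OF t] by (auto simp: assortments_def)
  have p_nonneg: "\<And>j. j \<in> Sst t \<Longrightarrow> 0 \<le> pst t j" using S p by (auto simp: price_vectors_def)
  have b: "\<And>j. j \<in> Sst t \<Longrightarrow> L0 \<le> phi \<bullet> x t j" using S assms(8)[OF t] by auto
  have a: "\<And>j. j \<in> Sst t \<Longrightarrow> psi \<bullet> x t j \<le> W"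
    using S(1) assms(6)[OF t] assms(7) by (intro inner_le_of_norm_pair_le) auto
  have opt: "revenue x psi phi t (Sst t) ((pst t)(i := q)) \<le> R" if "0 \<le> q" for q
    using assms(9)[OF t] p that unfolding R_def by (auto simp: price_vectors_def)
  have "pst t i = R + 1 / (phi \<bullet> x t i)"
    unfolding R_def using finite_subset[OF S(1)] i b[OF i] assms(5) opt
    by (intro optimal_price_eq_markup revenue_nonneg p_nonneg) (auto simp: R_def)
  moreover have "L0 * R \<le> 2 + W + ln (real K)"
  proof (rule le_add_ln_of_le_mult_exp)
    show "L0 * R \<le> real K * exp (W - 1 - L0 * R)"
      using revenue_le_card_mult_exp[where S = "Sst t" and p = "pst t" and x = x and t = t,
          OF assms(5) b a p_nonneg] S(2)
      unfolding R_def by (smt (verit) exp_gt_zero mult_right_mono of_nat_mono)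
  qed (use assms(2,4) in auto)
  moreover have "1 / (phi \<bullet> x t i) \<le> 1 / L0" using b[OF i] assms(5) by (simp add: frac_le)
  ultimately show "0 \<le> pst t i \<and> pst t i \<le> (3 + W + ln (real K)) / L0"
    using p_nonneg[OF i] assms(5) by (simp add: field_simps)
qed

end
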